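(* The graphs $P_4+P_3$ and $2P_2+C_3$ are of class $\mathcal C_1$.
   Context: All graphs are finite, simple and undirected. $C_n$ and $P_n$ denote the cycle and the path on $n$ vertices; $kG$ denotes the disjoint union of $k$ copies of $G$. The join $G+H$ is obtained from vertex-disjoint copies of $G$ and $H$ by adding all edges between $V(G)$ and $V(H)$. A drawing is 1-planar if each edge is crossed at most once (adjacent edges never cross, no edge crosses itself); a graph is 1-planar if it has such a drawing. For a 1-planar drawing $D$, $D^\times$ is the plane graph obtained by turning each crossing into a new degree-4 vertex (a false vertex); $N_{D^\times}(c)$ is the neighbour set of a false vertex $c$. A 1-planar graph is of class $\mathcal C_0$ if it has a 1-planar drawing with $|N_{D^\times}(c_1)\cap N_{D^\times}(c_2)|=0$ for all distinct false vertices; it is of class $\mathcal C_1$ if it is not of class $\mathcal C_0$ and it has a 1-planar drawing with $|N_{D^\times}(c_1)\cap N_{D^\times}(c_2)|\le 1$ for all distinct false vertices $c_1,c_2$. *)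

theory Defs
  imports "HOL-Analysis.Analysis"
begin

type_synonym 'a graph = "'a set \<times> 'a set set"

definition verts :: "'a graph \<Rightarrow> 'a set" where "verts G = fst G"
definition edges :: "'a graph \<Rightarrow> 'a set set" where "edges G = snd G"

definition simple_graph :: "'a graph \<Rightarrow> bool" where
  "simple_graph G \<longleftrightarrow> finite (verts G) \<and>
     (\<forall>e\<in>edges G. e \<subseteq> verts G \<and> card e = 2)"

definition path_graph :: "nat \<Rightarrow> nat graph" where
  "path_graph n = ({0..<n}, {{i, Suc i} | i. Suc i < n})"

definition cycle_graph :: "nat \<Rightarrow> nat graph" where
  "cycle_graph n = ({0..<n}, {{i, Suc i} | i. Suc i < n} \<union> {{n - 1, 0}})"

definition disj_copies :: "nat \<Rightarrow> 'a graph \<Rightarrow> (nat \<times> 'a) graph" where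
  "disj_copies k G = ({0..<k} \<times> verts G,
     {Pair i ` e | i e. i < k \<and> e \<in> edges G})"

definition graph_join :: "'a graph \<Rightarrow> 'b graph \<Rightarrow> ('a + 'b) graph" where
  "graph_join G H = (Inl ` verts G \<union> Inr ` verts H,
     (image Inl) ` edges G \<union> (image Inr) ` edges H \<union>
     {{Inl u, Inr v} | u v. u \<in> verts G \<and> v \<in> verts H})"

definition edge_interior :: "('a set \<Rightarrow> real \<Rightarrow> complex) \<Rightarrow> 'a set \<Rightarrow> complex set" where
  "edge_interior \<gamma> e = \<gamma> e ` {0<..<1}"

definition is_drawing :: "'a graph \<Rightarrow> ('a \<Rightarrow> complex) \<Rightarrow> ('a set \<Rightarrow> real \<Rightarrow> complex) \<Rightarrow> bool" where
  "is_drawing G p \<gamma> \<longleftrightarrow> inj_on p (verts G) \<and>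
     (\<forall>e\<in>edges G. arc (\<gamma> e) \<and> {pathstart (\<gamma> e), pathfinish (\<gamma> e)} = p ` e \<and>
        (\<forall>v\<in>verts G. p v \<notin> edge_interior \<gamma> e))"

definition crosses :: "('a set \<Rightarrow> real \<Rightarrow> complex) \<Rightarrow> 'a set \<Rightarrow> 'a set \<Rightarrow> bool" where
  "crosses \<gamma> e f \<longleftrightarrow> e \<noteq> f \<and> edge_interior \<gamma> e \<inter> edge_interior \<gamma> f \<noteq> {}"

definition one_planar_drawing :: "'a graph \<Rightarrow> ('a \<Rightarrow> complex) \<Rightarrow> ('a set \<Rightarrow> real \<Rightarrow> complex) \<Rightarrow> bool" where
  "one_planar_drawing G p \<gamma> \<longleftrightarrow> is_drawing G p \<gamma> \<and>
     (\<forall>e\<in>edges G. \<forall>f\<in>edges G. crosses \<gamma> e f \<longrightarrow>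
        e \<inter> f = {} \<and>
        card (edge_interior \<gamma> e \<inter> edge_interior \<gamma> f) = 1 \<and>
        (\<forall>g\<in>edges G. crosses \<gamma> e g \<longrightarrow> g = f))"

definition false_vertices :: "'a graph \<Rightarrow> ('a set \<Rightarrow> real \<Rightarrow> complex) \<Rightarrow> complex set" where
  "false_vertices G \<gamma> = {c. \<exists>e\<in>edges G. \<exists>f\<in>edges G. e \<noteq> f \<and>
      c \<in> edge_interior \<gamma> e \<and> c \<in> edge_interior \<gamma> f}"

text \<open>Neighbourhood of a false vertex c in D^x.  In a 1-planar drawing each edge carries
  at most one crossing, so the neighbours of c in D^x are exactly the end vertices of the two
  edges crossing at c.\<close>
definition false_nbrs :: "'a graph \<Rightarrow> ('a set \<Rightarrow> real \<Rightarrow> complex) \<Rightarrow> complex \<Rightarrow> 'a set" where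
  "false_nbrs G \<gamma> c = {v. \<exists>e\<in>edges G. v \<in> e \<and> c \<in> edge_interior \<gamma> e}"

definition class_C0 :: "'a graph \<Rightarrow> bool" where
  "class_C0 G \<longleftrightarrow> (\<exists>p \<gamma>. one_planar_drawing G p \<gamma> \<and>
     (\<forall>c1\<in>false_vertices G \<gamma>. \<forall>c2\<in>false_vertices G \<gamma>. c1 \<noteq> c2 \<longrightarrow>
        card (false_nbrs G \<gamma> c1 \<inter> false_nbrs G \<gamma> c2) = 0))"

definition class_C1 :: "'a graph \<Rightarrow> bool" where
  "class_C1 G \<longleftrightarrow> \<not> class_C0 G \<and> (\<exists>p \<gamma>. one_planar_drawing G p \<gamma> \<and>
     (\<forall>c1\<in>false_vertices G \<gamma>. \<forall>c2\<in>false_vertices G \<gamma>. c1 \<noteq> c2 \<longrightarrow>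
        card (false_nbrs G \<gamma> c1 \<inter> false_nbrs G \<gamma> c2) \<le> 1))"

end

theory Submission
  imports Defs "HOL-Complex_Analysis.Winding_Numbers"
begin

text \<open>Both graphs have seven vertices and contain \<open>K\<^sub>4\<^sub>,\<^sub>3\<close>.  In a 1-planar drawing of class
  \<open>C\<^sub>0\<close> two distinct false vertices would have disjoint neighbourhoods of four vertices each,
  so there is at most one crossing.  Deleting a vertex of the four-side that lies on the crossing
  edges leaves a \<open>K\<^sub>3\<^sub>,\<^sub>3\<close> drawn without crossings, which the Jordan curve theorem rules out:
  the three paths between two vertices of one side form a theta graph, and wherever the third
  vertex lies, one of its edges would have to cross that theta graph.  On the other hand,
  explicit straight-line drawings with two crossings whose end vertices overlap in at most one
  vertex show that both graphs are of class \<open>C\<^sub>1\<close>.\<close>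

section \<open>Arcs and the Jordan curve theorem\<close>

lemma arcs_simple_loop:
  fixes x y :: "real \<Rightarrow> complex"
  assumes "arc x" "arc y" "pathstart x = a" "pathfinish x = b" "pathstart y = a" "pathfinish y = b"
    and "path_image x \<inter> path_image y \<subseteq> {a, b}"
  shows "simple_path (x +++ reversepath y)"
    and "pathfinish (x +++ reversepath y) = pathstart (x +++ reversepath y)"
    and "path_image (x +++ reversepath y) = path_image x \<union> path_image y"
  using assms by (auto simp: simple_path_join_loop_eq arc_reversepath path_image_join)

lemma Jordan_inside_outside_arcs:
  fixes x y :: "real \<Rightarrow> complex"
  assumes "arc x" "arc y" "pathstart x = a" "pathfinish x = b" "pathstart y = a" "pathfinish y = b"
    and "path_image x \<inter> path_image y \<subseteq> {a, b}"
  defines "S \<equiv> path_image x \<union> path_image y"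
  shows "inside S \<noteq> {}" "connected (inside S)" "frontier (inside S) = S"
    "inside S \<inter> outside S = {}" "inside S \<union> outside S = - S"
  using Jordan_inside_outside[OF arcs_simple_loop(1,2)[OF assms(1-7)]]
  unfolding arcs_simple_loop(3)[OF assms(1-7)] S_def by auto

lemma inside_arcs_iff_winding_number:
  fixes x y :: "real \<Rightarrow> complex"
  assumes "arc x" "arc y" "pathstart x = a" "pathfinish x = b" "pathstart y = a" "pathfinish y = b"
    and "path_image x \<inter> path_image y \<subseteq> {a, b}"
    and z: "z \<notin> path_image x \<union> path_image y"
  shows "z \<in> inside (path_image x \<union> path_image y) \<longleftrightarrow> winding_number x z \<noteq> winding_number y z"
proof -
  let ?c = "x +++ reversepath y"
  note loop = arcs_simple_loop[OF assms(1-7)]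
  have "winding_number ?c z = winding_number x z - winding_number y z"
    using z assms(1-6) by (simp add: winding_number_join arc_imp_path path_image_reversepath
        winding_number_reversepath)
  moreover have "z \<in> inside (path_image ?c) \<Longrightarrow> winding_number ?c z \<noteq> 0"
    using simple_closed_path_norm_winding_number_inside[OF loop(1)] by fastforce
  moreover have "z \<in> outside (path_image ?c) \<Longrightarrow> winding_number ?c z = 0"
    using winding_number_zero_in_outside loop simple_path_imp_path by blast
  moreover have "z \<in> inside (path_image ?c) \<or> z \<in> outside (path_image ?c)"
    using z loop(3) inside_Un_outside by blast
  ultimately show ?thesis unfolding loop(3) by force
qed

lemma connected_subset_inside:
  assumes "connected T" "T \<inter> S = {}" "x \<in> T" "x \<in> inside S"
  shows "T \<subseteq> inside S"
proof
  fix y assume "y \<in> T"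
  then have "connected_component (- S) x y"
    unfolding connected_component_def using assms by blast
  then show "y \<in> inside S" using inside_same_component assms by blast
qed

lemma connected_subset_outside:
  assumes "connected T" "T \<inter> S = {}" "x \<in> T" "x \<in> outside S"
  shows "T \<subseteq> outside S"
proof
  fix y assume "y \<in> T"
  then have "connected_component (- S) x y"
    unfolding connected_component_def using assms by blast
  then show "y \<in> outside S" using outside_same_component assms by blast
qed

lemma arc_has_inner_point:
  assumes "arc p"
  obtains x where "x \<in> path_image p" "x \<noteq> pathstart p" "x \<noteq> pathfinish p"
proof
  have "inj_on p {0..1}" using assms arc_def by blast
  then show "p (1/2) \<noteq> pathstart p" "p (1/2) \<noteq> pathfinish p"
    unfolding pathstart_def pathfinish_def by (auto dest: inj_onD[of p _ "1/2"])
qed (simp add: path_image_def)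

text \<open>The inside of \<open>p \<union> q\<close> is connected and misses \<open>q \<union> r\<close>, so it lies inside \<open>q \<union> r\<close>;
  hence so does every inner point of its frontier arc \<open>p\<close>.\<close>
lemma theta_arc_meets_inside:
  fixes p q r :: "real \<Rightarrow> complex"
  assumes arcs: "arc p" "arc q" "arc r"
    and ends: "pathstart p = a" "pathfinish p = b" "pathstart q = a" "pathfinish q = b"
      "pathstart r = a" "pathfinish r = b"
    and meet: "path_image p \<inter> path_image q \<subseteq> {a,b}" "path_image p \<inter> path_image r \<subseteq> {a,b}"
      "path_image q \<inter> path_image r \<subseteq> {a,b}"
    and z: "z \<in> inside (path_image p \<union> path_image q)" "z \<in> inside (path_image q \<union> path_image r)"
    and r_outside: "path_image r \<inter> inside (path_image p \<union> path_image q) = {}"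
  shows "path_image p \<inter> inside (path_image q \<union> path_image r) \<noteq> {}"
proof -
  let ?I = "inside (path_image p \<union> path_image q)" and ?S = "path_image q \<union> path_image r"
  note pq = Jordan_inside_outside_arcs[OF arcs(1,2) ends(1-4) meet(1)]
  note qr = Jordan_inside_outside_arcs[OF arcs(2,3) ends(3-6) meet(3)]
  have "?I \<inter> ?S = {}"
    using r_outside inside_no_overlap[of "path_image p \<union> path_image q"] by blast
  then have "?I \<subseteq> inside ?S"
    using connected_subset_inside[OF pq(2) _ z] by blast
  then have "closure ?I \<subseteq> inside ?S \<union> ?S"
    using closure_mono[of ?I "inside ?S"] closure_Un_frontier[of "inside ?S"] qr(3) by simp
  moreover have "path_image p \<subseteq> closure ?I"
    using pq(3) frontier_closures[of ?I] by blast
  moreover obtain x where "x \<in> path_image p" "x \<noteq> a" "x \<noteq> b"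
    using arc_has_inner_point[OF arcs(1)] ends by metis
  ultimately show ?thesis using meet by blast
qed

lemma theta_some_arc_inside:
  fixes p q r :: "real \<Rightarrow> complex"
  assumes arcs: "arc p" "arc q" "arc r"
    and ends: "pathstart p = a" "pathfinish p = b" "pathstart q = a" "pathfinish q = b"
      "pathstart r = a" "pathfinish r = b"
    and meet: "path_image p \<inter> path_image q \<subseteq> {a,b}" "path_image p \<inter> path_image r \<subseteq> {a,b}"
      "path_image q \<inter> path_image r \<subseteq> {a,b}"
  shows "path_image r \<inter> inside (path_image p \<union> path_image q) \<noteq> {} \<or>
         path_image p \<inter> inside (path_image q \<union> path_image r) \<noteq> {} \<or>
         path_image q \<inter> inside (path_image p \<union> path_image r) \<noteq> {}"
proof (rule ccontr)
  assume none: "\<not> ?thesis"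
  obtain z where z: "z \<in> inside (path_image p \<union> path_image q)"
    using Jordan_inside_outside_arcs(1)[OF arcs(1,2) ends(1-4) meet(1)] by blast
  have "z \<notin> path_image r" using z none by blast
  moreover have "z \<notin> path_image p \<union> path_image q" using z inside_no_overlap by blast
  ultimately have "winding_number p z \<noteq> winding_number q z"
    and "z \<in> inside (path_image p \<union> path_image r) \<longleftrightarrow> winding_number p z \<noteq> winding_number r z"
    and "z \<in> inside (path_image q \<union> path_image r) \<longleftrightarrow> winding_number q z \<noteq> winding_number r z"
    using z inside_arcs_iff_winding_number[OF arcs(1,2) ends(1-4) meet(1)]
      inside_arcs_iff_winding_number[OF arcs(1,3) ends(1,2,5,6) meet(2)]
      inside_arcs_iff_winding_number[OF arcs(2,3) ends(3-6) meet(3)] by blast+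
  then consider "z \<in> inside (path_image p \<union> path_image r)" | "z \<in> inside (path_image q \<union> path_image r)"
    by fastforce
  then show False
  proof cases
    case 1
    have "z \<in> inside (path_image q \<union> path_image p)" using z by (simp add: Un_commute)
    moreover have "path_image r \<inter> inside (path_image q \<union> path_image p) = {}"
      using none by (simp add: Un_commute)
    ultimately have "path_image q \<inter> inside (path_image p \<union> path_image r) \<noteq> {}"
      using theta_arc_meets_inside[OF arcs(2,1,3) ends(3,4,1,2,5,6) _ meet(3,2) _ 1] meet(1) by blast
    with none show False by blast
  next
    case 2
    show False using theta_arc_meets_inside[OF arcs ends meet z 2] none by blast
  qed
qed

section \<open>Drawings of \<open>K\<^sub>3\<^sub>,\<^sub>3\<close>\<close>

locale planar_K33 =
  fixes A B :: "nat \<Rightarrow> complex" and g :: "nat \<Rightarrow> nat \<Rightarrow> real \<Rightarrow> complex"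
  assumes arc_g: "\<And>i j. i < 3 \<Longrightarrow> j < 3 \<Longrightarrow> arc (g i j) \<and> pathstart (g i j) = A i \<and> pathfinish (g i j) = B j"
    and inj_A: "\<And>i k. i < 3 \<Longrightarrow> k < 3 \<Longrightarrow> A i = A k \<Longrightarrow> i = k"
    and inj_B: "\<And>j l. j < 3 \<Longrightarrow> l < 3 \<Longrightarrow> B j = B l \<Longrightarrow> j = l"
    and A_neq_B: "\<And>i j. i < 3 \<Longrightarrow> j < 3 \<Longrightarrow> A i \<noteq> B j"
    and g_meet: "\<And>i j k l. i < 3 \<Longrightarrow> j < 3 \<Longrightarrow> k < 3 \<Longrightarrow> l < 3 \<Longrightarrow> (i,j) \<noteq> (k,l) \<Longrightarrow>
       path_image (g i j) \<inter> path_image (g k l) \<subseteq> {A i, B j} \<inter> {A k, B l}"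
begin

definition arc_via :: "nat \<Rightarrow> real \<Rightarrow> complex" where
  "arc_via j = g 0 j +++ reversepath (g 1 j)"

lemma ends_in_g: "i < 3 \<Longrightarrow> j < 3 \<Longrightarrow> A i \<in> path_image (g i j) \<and> B j \<in> path_image (g i j)"
  using arc_g[of i j] by (metis pathstart_in_path_image pathfinish_in_path_image)

lemma A_distinct: "A 0 \<noteq> A 1" "A 0 \<noteq> A 2" "A 1 \<noteq> A 2"
  using inj_A[of 0 1] inj_A[of 0 2] inj_A[of 1 2] by auto

lemma
  assumes "j < 3"
  shows arc_via: "arc (arc_via j)"
    and arc_via_ends: "pathstart (arc_via j) = A 0" "pathfinish (arc_via j) = A 1"
    and path_image_arc_via: "path_image (arc_via j) = path_image (g 0 j) \<union> path_image (g 1 j)"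
proof -
  note g0 = arc_g[of 0 j] and g1 = arc_g[of 1 j]
  have "path_image (g 0 j) \<inter> path_image (g 1 j) \<subseteq> {B j}"
    using g_meet[of 0 j 1 j] assms A_distinct A_neq_B[of 0 j] by auto
  then show "arc (arc_via j)" unfolding arc_via_def using g0 g1 assms
    by (subst arc_join_eq) (auto simp: arc_reversepath path_image_reversepath)
  show "pathstart (arc_via j) = A 0" "pathfinish (arc_via j) = A 1"
    unfolding arc_via_def using g0 g1 assms by auto
  show "path_image (arc_via j) = path_image (g 0 j) \<union> path_image (g 1 j)"
    unfolding arc_via_def using g0 g1 assms by (simp add: path_image_join path_image_reversepath)
qed

lemma arc_via_meet:
  assumes "j < 3" "k < 3" "j \<noteq> k"
  shows "path_image (arc_via j) \<inter> path_image (arc_via k) = {A 0, A 1}"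
proof
  have "B j \<noteq> B k" using inj_B assms by blast
  then show "path_image (arc_via j) \<inter> path_image (arc_via k) \<subseteq> {A 0, A 1}"
    unfolding path_image_arc_via[OF assms(1)] path_image_arc_via[OF assms(2)]
    using g_meet[of 0 j 0 k] g_meet[of 0 j 1 k] g_meet[of 1 j 0 k] g_meet[of 1 j 1 k] assms A_distinct
      A_neq_B[of 0 j] A_neq_B[of 1 j] A_neq_B[of 0 k] A_neq_B[of 1 k]
    by auto
  show "{A 0, A 1} \<subseteq> path_image (arc_via j) \<inter> path_image (arc_via k)"
    using arc_via_ends[OF assms(1)] arc_via_ends[OF assms(2)]
      pathstart_in_path_image[of "arc_via j"] pathfinish_in_path_image[of "arc_via j"]
      pathstart_in_path_image[of "arc_via k"] pathfinish_in_path_image[of "arc_via k"] by simp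
qed

lemma A2_notin_arc_via: "j < 3 \<Longrightarrow> A 2 \<notin> path_image (arc_via j)"
  using path_image_arc_via ends_in_g[of 2 j] g_meet[of 0 j 2 j] g_meet[of 1 j 2 j] A_distinct
    A_neq_B[of 2 j] by fastforce

lemma g2_disjoint_arc_via:
  assumes "j < 3" "k < 3" "j \<noteq> k"
  shows "path_image (g 2 j) \<inter> path_image (arc_via k) = {}"
proof -
  have "B j \<noteq> B k" using inj_B assms by blast
  then have "{A 2, B j} \<inter> {A 0, B k} = {}" "{A 2, B j} \<inter> {A 1, B k} = {}"
    using assms A_distinct A_neq_B[of 0 j] A_neq_B[of 1 j] A_neq_B[of 2 k] by auto
  then show ?thesis
    unfolding path_image_arc_via[OF assms(2)] using g_meet[of 2 j 0 k] g_meet[of 2 j 1 k] assms by auto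
qed

text \<open>The arc via \<open>B l\<close> splits the inside of the cycle through \<open>B j\<close> and \<open>B k\<close> into two faces.
  Whether \<open>A 2\<close> lies outside that cycle or in either face, the arc from \<open>A 2\<close> to one of the
  points \<open>B m\<close> would have to leave the region containing \<open>A 2\<close>.\<close>
lemma arc_via_outside:
  assumes jkl: "j < 3" "k < 3" "l < 3" "distinct [j, k, l]"
  shows "path_image (arc_via l) \<inter> inside (path_image (arc_via j) \<union> path_image (arc_via k)) = {}"
proof (rule ccontr)
  assume l_inside: "\<not> ?thesis"
  let ?P = "\<lambda>j. path_image (arc_via j)"
  let ?I = "\<lambda>j k. inside (?P j \<union> ?P k)"
  have meet: "?P j \<inter> ?P k = {A 0, A 1}" "?P j \<inter> ?P l = {A 0, A 1}" "?P k \<inter> ?P l = {A 0, A 1}"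
    using arc_via_meet jkl by auto
  obtain split: "?I j l \<inter> ?I k l = {}" "?I j l \<union> ?I k l \<union> (?P l - {A 0, A 1}) = ?I j k"
    by (rule split_inside_simple_closed_curve[OF arc_imp_simple_path[OF arc_via] arc_via_ends
       arc_imp_simple_path[OF arc_via] arc_via_ends arc_imp_simple_path[OF arc_via] arc_via_ends
       A_distinct(1) meet]) (use jkl l_inside in auto)
  have jk: "?I j k \<inter> outside (?P j \<union> ?P k) = {}" "?I j k \<union> outside (?P j \<union> ?P k) = - (?P j \<union> ?P k)"
    using Jordan_inside_outside_arcs(4,5)[OF arc_via arc_via arc_via_ends arc_via_ends] jkl meet(1)
    by auto
  have spoke: "connected (path_image (g 2 m)) \<and> A 2 \<in> path_image (g 2 m) \<and> B m \<in> path_image (g 2 m)"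
    if "m < 3" for m
    using arc_g[OF _ that] ends_in_g[OF _ that] by (simp add: connected_path_image arc_imp_path)
  have B_on: "B m \<in> ?P m" "B m \<noteq> A 0" "B m \<noteq> A 1" if "m < 3" for m
    using ends_in_g[of 0 m] path_image_arc_via[of m] A_neq_B[of 0 m] A_neq_B[of 1 m] that by auto
  consider "A 2 \<in> outside (?P j \<union> ?P k)" | "A 2 \<in> ?I j l" | "A 2 \<in> ?I k l"
    using jk split A2_notin_arc_via jkl by blast
  then show False
  proof cases
    case 1
    have "path_image (g 2 l) \<subseteq> outside (?P j \<union> ?P k)"
      by (rule connected_subset_outside[OF _ _ _ 1]) (use spoke g2_disjoint_arc_via jkl in auto)
    then show False using spoke[of l] B_on[of l] split jk jkl by blast
  next
    case 2
    have "path_image (g 2 k) \<subseteq> ?I j l"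
      by (rule connected_subset_inside[OF _ _ _ 2]) (use spoke g2_disjoint_arc_via jkl in auto)
    then show False using spoke[of k] B_on[of k] split inside_no_overlap jkl by blast
  next
    case 3
    have "path_image (g 2 j) \<subseteq> ?I k l"
      by (rule connected_subset_inside[OF _ _ _ 3]) (use spoke g2_disjoint_arc_via jkl in auto)
    then show False using spoke[of j] B_on[of j] split inside_no_overlap jkl by blast
  qed
qed

end

theorem no_planar_K33: "\<not> planar_K33 A B g"
proof
  assume "planar_K33 A B g"
  then interpret planar_K33 A B g .
  have "path_image (arc_via 2) \<inter> inside (path_image (arc_via 0) \<union> path_image (arc_via 1)) \<noteq> {} \<or>
        path_image (arc_via 0) \<inter> inside (path_image (arc_via 1) \<union> path_image (arc_via 2)) \<noteq> {} \<or>
        path_image (arc_via 1) \<inter> inside (path_image (arc_via 0) \<union> path_image (arc_via 2)) \<noteq> {}"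
    by (rule theta_some_arc_inside[OF arc_via[of 0] arc_via[of 1] arc_via[of 2]
        arc_via_ends[of 0] arc_via_ends[of 1] arc_via_ends[of 2]])
      (use arc_via_meet in auto)
  then show False using arc_via_outside[of 0 1 2] arc_via_outside[of 1 2 0] arc_via_outside[of 0 2 1]
    by auto
qed

lemma path_image_ends_Un_interior: "path_image g = {pathstart g, pathfinish g} \<union> g ` {0<..<1}"
proof -
  have "{0..1::real} = {0, 1} \<union> {0<..<1}" by auto
  then show ?thesis by (auto simp: path_image_def pathstart_def pathfinish_def)
qed

lemma reversepath_image_interior: "reversepath g ` {0<..<1} = g ` {0<..<1}"
proof -
  have "(\<lambda>x. 1 - x) ` {0<..<1::real} = {0<..<1}"
  proof (intro equalityI subsetI)
    fix y :: real assume "y \<in> {0<..<1}"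
    then show "y \<in> (\<lambda>x. 1 - x) ` {0<..<1}" by (intro image_eqI[of _ _ "1 - y"]) auto
  qed auto
  then show ?thesis
    unfolding reversepath_def using image_image[of g "\<lambda>x. 1 - x" "{0<..<1}"] by simp
qed

lemma arc_oriented:
  assumes "arc g" "{pathstart g, pathfinish g} = {u, v}"
  obtains h where "arc h" "pathstart h = u" "pathfinish h = v"
    "path_image h = {u, v} \<union> g ` {0<..<1}"
proof (cases "pathstart g = u")
  case True
  with assms arc_distinct_ends have "pathfinish g = v" by (metis doubleton_eq_iff)
  show ?thesis
    by (rule that[of g]) (use True \<open>pathfinish g = v\<close> assms path_image_ends_Un_interior[of g] in simp_all)
next
  case False
  with assms have "pathstart g = v" "pathfinish g = u" by (auto simp: doubleton_eq_iff)
  with assms show ?thesis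
    using that[of "reversepath g"] path_image_ends_Un_interior[of "reversepath g"]
    by (simp add: arc_reversepath reversepath_image_interior insert_commute)
qed

lemma disjoint_images_neq: "f ` A \<inter> g ` B = {} \<Longrightarrow> x \<in> A \<Longrightarrow> y \<in> B \<Longrightarrow> f x \<noteq> g y"
  by (metis IntI empty_iff imageI)

lemma drawing_edge_arc:
  assumes "is_drawing G p \<gamma>" "{u, v} \<in> edges G"
  obtains h where "arc h" "pathstart h = p u" "pathfinish h = p v"
    "path_image h = {p u, p v} \<union> edge_interior \<gamma> {u, v}"
proof -
  have "arc (\<gamma> {u, v})" "{pathstart (\<gamma> {u, v}), pathfinish (\<gamma> {u, v})} = {p u, p v}"
    using assms unfolding is_drawing_def by auto
  then show ?thesis by (rule arc_oriented) (metis that edge_interior_def)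
qed

lemma uncrossed_drawing_planar_K33:
  fixes a b :: "nat \<Rightarrow> 'a"
  assumes G: "simple_graph G" and drawing: "is_drawing G p \<gamma>"
    and a: "inj_on a {..<3}" and b: "inj_on b {..<3}" and ab: "a ` {..<3} \<inter> b ` {..<3} = {}"
    and edges: "\<And>i j. i < 3 \<Longrightarrow> j < 3 \<Longrightarrow> {a i, b j} \<in> edges G"
    and uncrossed: "\<And>i j k l. i < 3 \<Longrightarrow> j < 3 \<Longrightarrow> k < 3 \<Longrightarrow> l < 3 \<Longrightarrow> (i, j) \<noteq> (k, l) \<Longrightarrow>
      edge_interior \<gamma> {a i, b j} \<inter> edge_interior \<gamma> {a k, b l} = {}"
  shows "\<exists>g. planar_K33 (p \<circ> a) (p \<circ> b) g"
proof -
  let ?drawn = "\<lambda>i j h. arc h \<and> pathstart h = p (a i) \<and> pathfinish h = p (b j) \<and>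
      path_image h = {p (a i), p (b j)} \<union> edge_interior \<gamma> {a i, b j}"
  define g where "g i j = (SOME h. ?drawn i j h)" for i j
  have g: "?drawn i j (g i j)" if ij: "i < 3" "j < 3" for i j
  proof -
    obtain h where "?drawn i j h" using drawing_edge_arc[OF drawing edges[OF ij]] by blast
    then have "\<exists>h. ?drawn i j h" by blast
    then show ?thesis unfolding g_def by (rule someI_ex)
  qed
  have a_vert: "a i \<in> verts G" if "i < 3" for i
    using G edges[OF that, of 0] unfolding simple_graph_def by auto
  have b_vert: "b j \<in> verts G" if "j < 3" for j
    using G edges[OF _ that, of 0] unfolding simple_graph_def by auto
  have a_neq_b: "a i \<noteq> b j" if "i < 3" "j < 3" for i j
    using disjoint_images_neq[OF ab] that by simp
  have "inj_on p (verts G)" using drawing unfolding is_drawing_def by simp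
  then have p_eq_iff: "p x = p y \<longleftrightarrow> x = y" if "x \<in> verts G" "y \<in> verts G" for x y
    using inj_on_eq_iff that by metis
  have vertex_off_edge: "p v \<notin> edge_interior \<gamma> {a i, b j}" if "i < 3" "j < 3" "v \<in> verts G" for i j v
    using drawing edges[OF that(1,2)] that(3) unfolding is_drawing_def by simp
  have "planar_K33 (p \<circ> a) (p \<circ> b) g"
  proof
    show "arc (g i j) \<and> pathstart (g i j) = (p \<circ> a) i \<and> pathfinish (g i j) = (p \<circ> b) j"
      if "i < 3" "j < 3" for i j
      using g[OF that] by simp
    show "i = k" if "i < 3" "k < 3" "(p \<circ> a) i = (p \<circ> a) k" for i k
      using that p_eq_iff[OF a_vert a_vert] inj_on_eq_iff[OF a, of i k] by simp
    show "j = l" if "j < 3" "l < 3" "(p \<circ> b) j = (p \<circ> b) l" for j l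
      using that p_eq_iff[OF b_vert b_vert] inj_on_eq_iff[OF b, of j l] by simp
    show "(p \<circ> a) i \<noteq> (p \<circ> b) j" if "i < 3" "j < 3" for i j
      using p_eq_iff[OF a_vert b_vert] a_neq_b that by simp
    show "path_image (g i j) \<inter> path_image (g k l) \<subseteq> {(p \<circ> a) i, (p \<circ> b) j} \<inter> {(p \<circ> a) k, (p \<circ> b) l}"
      if ijkl: "i < 3" "j < 3" "k < 3" "l < 3" "(i, j) \<noteq> (k, l)" for i j k l
      using g[OF ijkl(1,2)] g[OF ijkl(3,4)] uncrossed[OF ijkl] ijkl
      by (auto simp: vertex_off_edge a_vert b_vert)
  qed
  then show ?thesis by blast
qed

lemma drawing_K33_has_crossing:
  fixes a b :: "nat \<Rightarrow> 'a"
  assumes G: "simple_graph G" and drawing: "is_drawing G p \<gamma>"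
    and a: "inj_on a {..<3}" and b: "inj_on b {..<3}" and ab: "a ` {..<3} \<inter> b ` {..<3} = {}"
    and edges: "\<And>i j. i < 3 \<Longrightarrow> j < 3 \<Longrightarrow> {a i, b j} \<in> edges G"
  shows "\<exists>i<3. \<exists>j<3. \<exists>k<3. \<exists>l<3. (i, j) \<noteq> (k, l) \<and> crosses \<gamma> {a i, b j} {a k, b l}"
proof (rule ccontr)
  assume no_crossing: "\<not> ?thesis"
  have "edge_interior \<gamma> {a i, b j} \<inter> edge_interior \<gamma> {a k, b l} = {}"
    if ijkl: "i < 3" "j < 3" "k < 3" "l < 3" "(i, j) \<noteq> (k, l)" for i j k l
  proof -
    have "a i \<noteq> b l" "a k \<noteq> b j" using disjoint_images_neq[OF ab] ijkl by simp_all
    then have "{a i, b j} \<noteq> {a k, b l}"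
      using inj_on_eq_iff[OF a, of i k] inj_on_eq_iff[OF b, of j l] ijkl by (auto simp: doubleton_eq_iff)
    then show ?thesis using no_crossing ijkl unfolding crosses_def by blast
  qed
  then show False
    using uncrossed_drawing_planar_K33[OF G drawing a b ab edges] no_planar_K33 by blast
qed

section \<open>Drawings of class \<open>C\<^sub>0\<close>\<close>

lemma false_nbrs_subset_verts: "simple_graph G \<Longrightarrow> false_nbrs G \<gamma> c \<subseteq> verts G"
  unfolding simple_graph_def false_nbrs_def by blast

lemma card_false_nbrs_ge_4:
  assumes G: "simple_graph G" and D: "one_planar_drawing G p \<gamma>" and c: "c \<in> false_vertices G \<gamma>"
  shows "4 \<le> card (false_nbrs G \<gamma> c)"
proof -
  obtain e f where ef: "e \<in> edges G" "f \<in> edges G" "e \<noteq> f" "c \<in> edge_interior \<gamma> e" "c \<in> edge_interior \<gamma> f"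
    using c unfolding false_vertices_def by blast
  then have "crosses \<gamma> e f" unfolding crosses_def by blast
  then have "e \<inter> f = {}" using D ef(1,2) unfolding one_planar_drawing_def by blast
  moreover have "card e = 2" "card f = 2" "finite e" "finite f"
    using G ef(1,2) unfolding simple_graph_def by (auto intro: card_ge_0_finite)
  ultimately have "card (e \<union> f) = 4" by (simp add: card_Un_disjoint)
  moreover have "e \<union> f \<subseteq> false_nbrs G \<gamma> c" using ef unfolding false_nbrs_def by blast
  moreover have "finite (false_nbrs G \<gamma> c)"
    using G false_nbrs_subset_verts finite_subset unfolding simple_graph_def by metis
  ultimately show ?thesis by (metis card_mono)
qed

text \<open>With at most seven vertices there is no room for two false vertices with disjoint
  neighbourhoods of four vertices each.\<close>
lemma C0_drawing_unique_false_vertex: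
  assumes G: "simple_graph G" "card (verts G) \<le> 7" and D: "one_planar_drawing G p \<gamma>"
    and C0: "\<forall>c1\<in>false_vertices G \<gamma>. \<forall>c2\<in>false_vertices G \<gamma>. c1 \<noteq> c2 \<longrightarrow>
        card (false_nbrs G \<gamma> c1 \<inter> false_nbrs G \<gamma> c2) = 0"
    and c: "c1 \<in> false_vertices G \<gamma>" "c2 \<in> false_vertices G \<gamma>"
  shows "c1 = c2"
proof (rule ccontr)
  assume "c1 \<noteq> c2"
  let ?N = "false_nbrs G \<gamma>"
  have fin: "finite (verts G)" using G unfolding simple_graph_def by blast
  have N: "?N c1 \<union> ?N c2 \<subseteq> verts G" using false_nbrs_subset_verts[OF G(1)] by blast
  then have finN: "finite (?N c1)" "finite (?N c2)" using fin finite_subset by blast+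
  have "card (?N c1 \<inter> ?N c2) = 0" using C0 c \<open>c1 \<noteq> c2\<close> by blast
  then have "?N c1 \<inter> ?N c2 = {}" using finN by simp
  then have "card (?N c1 \<union> ?N c2) = card (?N c1) + card (?N c2)" using finN by (simp add: card_Un_disjoint)
  moreover have "4 \<le> card (?N c1)" "4 \<le> card (?N c2)" using card_false_nbrs_ge_4[OF G(1) D] c by blast+
  moreover have "card (?N c1 \<union> ?N c2) \<le> card (verts G)" using card_mono[OF fin N] .
  ultimately show False using G(2) by linarith
qed

lemma one_planar_unique_false_vertex_crossing:
  assumes D: "one_planar_drawing G p \<gamma>"
    and unique: "\<And>c1 c2. c1 \<in> false_vertices G \<gamma> \<Longrightarrow> c2 \<in> false_vertices G \<gamma> \<Longrightarrow> c1 = c2"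
  obtains e0 f0 where "\<And>e f. e \<in> edges G \<Longrightarrow> f \<in> edges G \<Longrightarrow> crosses \<gamma> e f \<Longrightarrow> {e, f} = {e0, f0}"
proof (cases "\<exists>e0\<in>edges G. \<exists>f0\<in>edges G. crosses \<gamma> e0 f0")
  case False
  then show ?thesis using that by blast
next
  case True
  then obtain e0 f0 c0 where e0f0: "e0 \<in> edges G" "f0 \<in> edges G" "e0 \<noteq> f0"
    "c0 \<in> edge_interior \<gamma> e0" "c0 \<in> edge_interior \<gamma> f0"
    unfolding crosses_def by blast
  have c0: "c0 \<in> false_vertices G \<gamma>" unfolding false_vertices_def using e0f0 by blast
  have one_crossing: "\<And>g. g \<in> edges G \<Longrightarrow> crosses \<gamma> e0 g \<Longrightarrow> g = f0"
    using D e0f0 unfolding one_planar_drawing_def crosses_def by blast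
  have crossing_edge: "e \<in> {e0, f0}" if ef: "e \<in> edges G" "f \<in> edges G" "crosses \<gamma> e f" for e f
  proof (rule ccontr)
    assume e: "e \<notin> {e0, f0}"
    obtain c where "c \<in> edge_interior \<gamma> e" "c \<in> edge_interior \<gamma> f" "e \<noteq> f"
      using ef(3) unfolding crosses_def by blast
    moreover from this have "c = c0"
      using unique[OF _ c0] ef(1,2) unfolding false_vertices_def by blast
    ultimately have "crosses \<gamma> e0 e" using e e0f0 unfolding crosses_def by blast
    then show False using one_crossing ef(1) e by blast
  qed
  have "{e, f} = {e0, f0}" if "e \<in> edges G" "f \<in> edges G" "crosses \<gamma> e f" for e f
  proof -
    have "crosses \<gamma> f e" using that(3) unfolding crosses_def by blast
    then show ?thesis
      using crossing_edge that crossing_edge[of f e] unfolding crosses_def by blast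
  qed
  then show ?thesis by (rule that)
qed

lemma inj_on_delete_index:
  fixes a :: "nat \<Rightarrow> 'a"
  assumes a: "inj_on a {..<Suc n}" and r: "r < Suc n"
  obtains a' where "inj_on a' {..<n}" "a' ` {..<n} = a ` ({..<Suc n} - {r})"
proof
  define skip where "skip i = (if i < r then i else Suc i)" for i
  have skip_image: "skip ` {..<n} = {..<Suc n} - {r}"
  proof (intro equalityI subsetI)
    fix m assume "m \<in> {..<Suc n} - {r}"
    then have "m = skip (if m < r then m else m - 1)" "(if m < r then m else m - 1) < n"
      using r unfolding skip_def by auto
    then show "m \<in> skip ` {..<n}" by blast
  qed (auto simp: skip_def)
  then show "(a \<circ> skip) ` {..<n} = a ` ({..<Suc n} - {r})" by (simp only: image_comp[symmetric])
  have "inj_on skip {..<n}" unfolding skip_def inj_on_def by auto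
  then show "inj_on (a \<circ> skip) {..<n}"
    by (rule comp_inj_on) (rule inj_on_subset[OF a], use skip_image in auto)
qed

theorem not_class_C0_if_K43:
  fixes a b :: "nat \<Rightarrow> 'a"
  assumes G: "simple_graph G" "card (verts G) \<le> 7"
    and a: "inj_on a {..<4}" and b: "inj_on b {..<3}" and ab: "a ` {..<4} \<inter> b ` {..<3} = {}"
    and edges: "\<And>i j. i < 4 \<Longrightarrow> j < 3 \<Longrightarrow> {a i, b j} \<in> edges G"
  shows "\<not> class_C0 G"
proof
  assume "class_C0 G"
  then obtain p \<gamma> where D: "one_planar_drawing G p \<gamma>"
    and C0: "\<forall>c1\<in>false_vertices G \<gamma>. \<forall>c2\<in>false_vertices G \<gamma>. c1 \<noteq> c2 \<longrightarrow>
        card (false_nbrs G \<gamma> c1 \<inter> false_nbrs G \<gamma> c2) = 0"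
    unfolding class_C0_def by blast
  obtain e0 f0 where single: "\<And>e f. e \<in> edges G \<Longrightarrow> f \<in> edges G \<Longrightarrow> crosses \<gamma> e f \<Longrightarrow> {e, f} = {e0, f0}"
    using one_planar_unique_false_vertex_crossing[OF D C0_drawing_unique_false_vertex[OF G D C0]] by blast
  obtain r where r: "r < 4" and r_crossing: "\<And>i. i < 4 \<Longrightarrow> a i \<in> e0 \<union> f0 \<Longrightarrow> a r \<in> e0 \<union> f0"
  proof (cases "\<exists>i<4. a i \<in> e0 \<union> f0")
    case True
    then obtain i where "i < 4" "a i \<in> e0 \<union> f0" by blast
    then show ?thesis using that by blast
  next
    case False
    then show ?thesis using that[of 0] by auto
  qed
  have "inj_on a {..<Suc 3}" "r < Suc 3" using a r by simp_all
  then obtain a' :: "nat \<Rightarrow> 'a" where a': "inj_on a' {..<3}" and "a' ` {..<3} = a ` ({..<Suc 3} - {r})"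
    by (rule inj_on_delete_index)
  then have a'_image: "a' ` {..<3} = a ` ({..<4} - {r})" by simp
  have a'_a: "\<exists>m<4. m \<noteq> r \<and> a' i = a m" if "i < 3" for i
  proof -
    have "a' i \<in> a ` ({..<4} - {r})" using that a'_image by (metis imageI lessThan_iff)
    then show ?thesis by auto
  qed
  have a'b: "a' ` {..<3} \<inter> b ` {..<3} = {}" using a'_image ab by auto
  have drawing: "is_drawing G p \<gamma>" using D unfolding one_planar_drawing_def by blast
  have a'_edges: "{a' i, b j} \<in> edges G" if "i < 3" "j < 3" for i j
    using a'_a[OF that(1)] edges that(2) by auto
  obtain i j k l where ijkl: "i < 3" "j < 3" "k < 3" "l < 3" and cross: "crosses \<gamma> {a' i, b j} {a' k, b l}"
    using drawing_K33_has_crossing[OF G(1) drawing a' b a'b a'_edges] by auto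
  have crossing_pair: "{{a' i, b j}, {a' k, b l}} = {e0, f0}"
    by (rule single[OF a'_edges[OF ijkl(1,2)] a'_edges[OF ijkl(3,4)] cross])
  have "e0 \<union> f0 = {a' i, b j} \<union> {a' k, b l}"
    using arg_cong[OF crossing_pair, of Union] by simp
  then have "a r \<in> {a' i, b j, a' k, b l}"
    using a'_a[OF ijkl(1)] r_crossing by auto
  moreover have "a r \<notin> a' ` {..<3}" using a'_image inj_on_image_mem_iff[OF a] r by auto
  moreover have "a r \<noteq> b j" "a r \<noteq> b l" using disjoint_images_neq[OF ab] r ijkl by simp_all
  ultimately show False using ijkl by auto
qed

section \<open>Straight-line drawings\<close>

definition orient :: "complex \<Rightarrow> complex \<Rightarrow> complex \<Rightarrow> real" where
  "orient a b c = (Re b - Re a) * (Im c - Im a) - (Im b - Im a) * (Re c - Re a)"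

definition same_side :: "real \<Rightarrow> real \<Rightarrow> bool" where
  "same_side x y \<longleftrightarrow> (0 \<le> x \<and> 0 \<le> y \<and> (0 < x \<or> 0 < y)) \<or> (x \<le> 0 \<and> y \<le> 0 \<and> (x < 0 \<or> y < 0))"

definition separated :: "complex \<Rightarrow> complex \<Rightarrow> complex \<Rightarrow> complex \<Rightarrow> bool" where
  "separated a b c d \<longleftrightarrow> same_side (orient a b c) (orient a b d) \<or> same_side (orient c d a) (orient c d b)"

lemma orient_convex_comb: "orient a b ((1 - u) *\<^sub>R c + u *\<^sub>R d) = (1 - u) * orient a b c + u * orient a b d"
  unfolding orient_def by (simp add: algebra_simps)

lemma orient_closed_segment: "x \<in> closed_segment a b \<Longrightarrow> orient a b x = 0"
proof -
  assume "x \<in> closed_segment a b"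
  then obtain u where "x = (1 - u) *\<^sub>R a + u *\<^sub>R b" by (auto simp: in_segment)
  then show ?thesis by (simp add: orient_convex_comb, simp add: orient_def)
qed

lemma same_side_convex_comb: "same_side x y \<Longrightarrow> 0 < u \<Longrightarrow> u < 1 \<Longrightarrow> (1 - u) * x + u * y \<noteq> 0"
  unfolding same_side_def
  by (smt (verit) mult_pos_pos mult_nonneg_nonneg mult_pos_neg mult_nonneg_nonpos)

lemma open_segments_disjoint_if_same_side:
  assumes "same_side (orient a b c) (orient a b d)"
  shows "open_segment a b \<inter> open_segment c d = {}"
proof (rule ccontr)
  assume "open_segment a b \<inter> open_segment c d \<noteq> {}"
  then obtain x where x: "x \<in> open_segment a b" "x \<in> open_segment c d" by blast
  have "orient a b x = 0" using x(1) orient_closed_segment open_closed_segment by blast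
  moreover obtain u where "0 < u" "u < 1" "x = (1 - u) *\<^sub>R c + u *\<^sub>R d"
    using x(2) by (auto simp: in_segment)
  ultimately show False using same_side_convex_comb[OF assms] by (simp add: orient_convex_comb)
qed

lemma open_segments_disjoint_if_separated:
  "separated a b c d \<Longrightarrow> open_segment a b \<inter> open_segment c d = {}"
  unfolding separated_def using open_segments_disjoint_if_same_side[of a b c d]
    open_segments_disjoint_if_same_side[of c d a b] by blast

lemma open_segments_Int_singleton:
  assumes "0 < t" "t < 1" "0 < s" "s < 1"
    and z: "(1 - t) *\<^sub>R a + t *\<^sub>R b = (1 - s) *\<^sub>R c + s *\<^sub>R d"
    and not_parallel: "orient 0 (b - a) (d - c) \<noteq> 0"
  shows "open_segment a b \<inter> open_segment c d = {(1 - t) *\<^sub>R a + t *\<^sub>R b}"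
proof -
  let ?z = "(1 - t) *\<^sub>R a + t *\<^sub>R b"
  have "a \<noteq> b" "c \<noteq> d" using not_parallel unfolding orient_def by auto
  then have z_in: "?z \<in> open_segment a b" "?z \<in> open_segment c d"
    using assms unfolding in_segment by (metis, metis)
  have "x = ?z" if x: "x \<in> open_segment a b" "x \<in> open_segment c d" for x
  proof -
    have "orient a b x = 0" "orient c d x = 0" "orient a b ?z = 0" "orient c d ?z = 0"
      using x z_in orient_closed_segment open_closed_segment by blast+
    then have "(Re b - Re a) * (Im x - Im ?z) - (Im b - Im a) * (Re x - Re ?z) = 0"
      and "(Re d - Re c) * (Im x - Im ?z) - (Im d - Im c) * (Re x - Re ?z) = 0"
      unfolding orient_def by (simp_all add: algebra_simps)
    then have "orient 0 (b - a) (d - c) * (Re x - Re ?z) = 0" "orient 0 (b - a) (d - c) * (Im x - Im ?z) = 0"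
      unfolding orient_def by (simp_all, algebra+)
    then show ?thesis using not_parallel by (simp add: complex_eq_iff)
  qed
  then show ?thesis using z_in by blast
qed

lemma linepath_image_interior: "a \<noteq> b \<Longrightarrow> linepath a b ` {0<..<1} = open_segment a b"
  unfolding linepath_def by (auto simp: in_segment image_iff) (metis greaterThanLessThan_iff)

text \<open>Which orientation of the segment \<open>SOME\<close> picks is immaterial.\<close>
definition straight_arcs :: "('a \<Rightarrow> complex) \<Rightarrow> 'a set \<Rightarrow> real \<Rightarrow> complex" where
  "straight_arcs p e = (let uv = SOME uv. e = {fst uv, snd uv} in linepath (p (fst uv)) (p (snd uv)))"

lemma straight_arcs:
  assumes "p u \<noteq> p v"
  shows "arc (straight_arcs p {u, v})"
    and "{pathstart (straight_arcs p {u, v}), pathfinish (straight_arcs p {u, v})} = {p u, p v}"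
    and "edge_interior (straight_arcs p) {u, v} = open_segment (p u) (p v)"
proof -
  define w where "w = (SOME uv. {u, v} = {fst uv, snd uv})"
  have "{u, v} = {fst w, snd w}" unfolding w_def by (rule someI[of _ "(u, v)"]) simp
  then have w: "(fst w = u \<and> snd w = v) \<or> (fst w = v \<and> snd w = u)" by (auto simp: doubleton_eq_iff)
  have g: "straight_arcs p {u, v} = linepath (p (fst w)) (p (snd w))"
    unfolding straight_arcs_def w_def Let_def ..
  have distinct: "p (fst w) \<noteq> p (snd w)" using w assms by auto
  then show "arc (straight_arcs p {u, v})" unfolding g by (simp add: arc_linepath)
  show "edge_interior (straight_arcs p) {u, v} = open_segment (p u) (p v)"
    unfolding g edge_interior_def linepath_image_interior[OF distinct]
    using w open_segment_commute by metis
  show "{pathstart (straight_arcs p {u, v}), pathfinish (straight_arcs p {u, v})} = {p u, p v}"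
    unfolding g using w by auto
qed

text \<open>A certificate that drawing the edges \<open>L\<close> of \<open>G\<close> as straight segments between the points
  \<open>p\<close> gives a 1-planar drawing of class at most \<open>C\<^sub>1\<close>.  An entry \<open>(a, b, c, d, t, s)\<close> of \<open>X\<close>
  records that the segments \<open>ab\<close> and \<open>cd\<close> cross at parameter \<open>t\<close> on \<open>ab\<close> and \<open>s\<close> on \<open>cd\<close>;
  every other pair of edges is separated by the line through one of them.\<close>
locale straight_certificate =
  fixes G :: "'a graph" and p :: "'a \<Rightarrow> complex" and L :: "('a \<times> 'a) list"
    and X :: "('a \<times> 'a \<times> 'a \<times> 'a \<times> real \<times> real) list"
  assumes edges_L: "edges G = (\<lambda>(u, v). {u, v}) ` set L"
    and inj_p: "inj_on p (verts G)"
    and L_verts: "\<forall>(u, v)\<in>set L. u \<in> verts G \<and> v \<in> verts G \<and> u \<noteq> v"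
    and L_avoids_verts: "\<forall>(u, v)\<in>set L. \<forall>w\<in>verts G. w = u \<or> w = v \<or> orient (p u) (p v) (p w) \<noteq> 0"
    and L_pairs: "\<forall>(u, v)\<in>set L. \<forall>(u', v')\<in>set L. {u, v} = {u', v'} \<or> separated (p u) (p v) (p u') (p v') \<or>
        (\<exists>(a, b, c, d, t, s)\<in>set X. ({a, b} = {u, v} \<and> {c, d} = {u', v'}) \<or> ({a, b} = {u', v'} \<and> {c, d} = {u, v}))"
    and X_crossings: "\<forall>(a, b, c, d, t, s)\<in>set X. (a, b) \<in> set L \<and> (c, d) \<in> set L \<and> distinct [a, b, c, d] \<and>
        0 < t \<and> t < 1 \<and> 0 < s \<and> s < 1 \<and> (1 - t) *\<^sub>R p a + t *\<^sub>R p b = (1 - s) *\<^sub>R p c + s *\<^sub>R p d \<and>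
        orient 0 (p b - p a) (p d - p c) \<noteq> 0"
    and X_apart: "\<forall>(a, b, c, d, t, s)\<in>set X. \<forall>(a', b', c', d', t', s')\<in>set X.
        (a, b, c, d, t, s) \<noteq> (a', b', c', d', t', s') \<longrightarrow>
        {a, b} \<noteq> {a', b'} \<and> {a, b} \<noteq> {c', d'} \<and> {c, d} \<noteq> {a', b'} \<and> {c, d} \<noteq> {c', d'} \<and>
        card ({a, b, c, d} \<inter> {a', b', c', d'}) \<le> 1"
begin

abbreviation \<gamma> :: "'a set \<Rightarrow> real \<Rightarrow> complex" where "\<gamma> \<equiv> straight_arcs p"

lemma edge_of_L: "e \<in> edges G \<Longrightarrow> \<exists>u v. (u, v) \<in> set L \<and> e = {u, v}"
  using edges_L by auto

lemma L_points_distinct: "(u, v) \<in> set L \<Longrightarrow> p u \<noteq> p v"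
  using L_verts inj_p by (auto dest: inj_onD)

lemma X_crossing:
  assumes "(a, b, c, d, t, s) \<in> set X"
  shows "{a, b} \<inter> {c, d} = {}"
    and "edge_interior \<gamma> {a, b} \<inter> edge_interior \<gamma> {c, d} = {(1 - t) *\<^sub>R p a + t *\<^sub>R p b}"
proof -
  note x = X_crossings[rule_format, OF assms, unfolded prod.case]
  show "{a, b} \<inter> {c, d} = {}" using x by auto
  have "open_segment (p a) (p b) \<inter> open_segment (p c) (p d) = {(1 - t) *\<^sub>R p a + t *\<^sub>R p b}"
    using x by (intro open_segments_Int_singleton) auto
  moreover have ab: "(a, b) \<in> set L" and cd: "(c, d) \<in> set L" using x by blast+
  ultimately show "edge_interior \<gamma> {a, b} \<inter> edge_interior \<gamma> {c, d} = {(1 - t) *\<^sub>R p a + t *\<^sub>R p b}"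
    using straight_arcs(3)[of p, OF L_points_distinct[OF ab]] straight_arcs(3)[of p, OF L_points_distinct[OF cd]]
    by simp
qed

lemma X_entry_unique:
  assumes "(a, b, c, d, t, s) \<in> set X" "(a', b', c', d', t', s') \<in> set X"
    and "e \<in> {{a, b}, {c, d}}" "e \<in> {{a', b'}, {c', d'}}"
  shows "(a, b, c, d, t, s) = (a', b', c', d', t', s')"
  using X_apart[rule_format, OF assms(1), unfolded prod.case, rule_format, OF assms(2)] assms(3,4) by auto

lemma crossing_listed:
  assumes "e \<in> edges G" "f \<in> edges G" "e \<noteq> f" "edge_interior \<gamma> e \<inter> edge_interior \<gamma> f \<noteq> {}"
  shows "\<exists>(a, b, c, d, t, s)\<in>set X. ({a, b} = e \<and> {c, d} = f) \<or> ({a, b} = f \<and> {c, d} = e)"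
proof -
  obtain u v u' v' where uv: "(u, v) \<in> set L" "e = {u, v}" and uv': "(u', v') \<in> set L" "f = {u', v'}"
    using edge_of_L[OF assms(1)] edge_of_L[OF assms(2)] by blast
  have "open_segment (p u) (p v) \<inter> open_segment (p u') (p v') \<noteq> {}"
    using assms(4) straight_arcs(3)[of p, OF L_points_distinct[OF uv(1)]]
      straight_arcs(3)[of p, OF L_points_distinct[OF uv'(1)]] uv(2) uv'(2) by simp
  then have "\<not> separated (p u) (p v) (p u') (p v')" using open_segments_disjoint_if_separated by blast
  moreover have "{u, v} \<noteq> {u', v'}" using assms(3) uv(2) uv'(2) by simp
  moreover have "{u, v} = {u', v'} \<or> separated (p u) (p v) (p u') (p v') \<or>
      (\<exists>(a, b, c, d, t, s)\<in>set X. ({a, b} = {u, v} \<and> {c, d} = {u', v'}) \<or> ({a, b} = {u', v'} \<and> {c, d} = {u, v}))"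
    by (rule bspec[OF bspec[OF L_pairs uv(1), unfolded prod.case] uv'(1), unfolded prod.case])
  ultimately have "\<exists>(a, b, c, d, t, s)\<in>set X.
      ({a, b} = {u, v} \<and> {c, d} = {u', v'}) \<or> ({a, b} = {u', v'} \<and> {c, d} = {u, v})"
    by blast
  then show ?thesis unfolding uv(2) uv'(2) .
qed

lemma one_planar: "one_planar_drawing G p \<gamma>"
  unfolding one_planar_drawing_def is_drawing_def
proof (intro conjI ballI impI)
  show "inj_on p (verts G)" by (rule inj_p)
  fix e assume "e \<in> edges G"
  then obtain u v where uv: "(u, v) \<in> set L" "e = {u, v}" using edge_of_L by blast
  note drawn = straight_arcs[of p, OF L_points_distinct[OF uv(1)]]
  show "arc (\<gamma> e)" "{pathstart (\<gamma> e), pathfinish (\<gamma> e)} = p ` e" using drawn uv(2) by simp_all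
  fix w assume "w \<in> verts G"
  then have "w = u \<or> w = v \<or> orient (p u) (p v) (p w) \<noteq> 0"
    using L_avoids_verts uv(1) by blast
  then have "p w \<notin> open_segment (p u) (p v)"
    using orient_closed_segment open_closed_segment unfolding open_segment_def by blast
  then show "p w \<notin> edge_interior \<gamma> e" using drawn uv(2) by simp
next
  fix e f assume ef: "e \<in> edges G" "f \<in> edges G" and "crosses \<gamma> e f"
  then have ef': "e \<noteq> f" "edge_interior \<gamma> e \<inter> edge_interior \<gamma> f \<noteq> {}" unfolding crosses_def by auto
  obtain a b c d t s where x: "(a, b, c, d, t, s) \<in> set X"
    and o: "({a, b} = e \<and> {c, d} = f) \<or> ({a, b} = f \<and> {c, d} = e)"
    using crossing_listed[OF ef ef'] by auto
  show "e \<inter> f = {}" using X_crossing(1)[OF x] o by blast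
  show "card (edge_interior \<gamma> e \<inter> edge_interior \<gamma> f) = 1"
    using X_crossing(2)[OF x] o by (metis Int_commute is_singletonI is_singleton_altdef)
  fix g assume g: "g \<in> edges G" and "crosses \<gamma> e g"
  then have eg: "e \<noteq> g" "edge_interior \<gamma> e \<inter> edge_interior \<gamma> g \<noteq> {}" unfolding crosses_def by auto
  obtain a' b' c' d' t' s' where x': "(a', b', c', d', t', s') \<in> set X"
    and o': "({a', b'} = e \<and> {c', d'} = g) \<or> ({a', b'} = g \<and> {c', d'} = e)"
    using crossing_listed[OF ef(1) g eg] by auto
  have "(a, b, c, d, t, s) = (a', b', c', d', t', s')"
    by (rule X_entry_unique[OF x x', of e]) (use o o' in blast)+
  then show "g = f" using o o' eg(1) ef'(1) by auto
qed

lemma false_vertex_listed: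
  assumes "c \<in> false_vertices G \<gamma>"
  obtains a b c' d t s where "(a, b, c', d, t, s) \<in> set X" "c = (1 - t) *\<^sub>R p a + t *\<^sub>R p b"
    "false_nbrs G \<gamma> c \<subseteq> {a, b, c', d}"
proof -
  obtain e f where ef: "e \<in> edges G" "f \<in> edges G" "e \<noteq> f" "c \<in> edge_interior \<gamma> e" "c \<in> edge_interior \<gamma> f"
    using assms unfolding false_vertices_def by blast
  obtain a b c' d t s where x: "(a, b, c', d, t, s) \<in> set X"
    and o: "({a, b} = e \<and> {c', d} = f) \<or> ({a, b} = f \<and> {c', d} = e)"
    using crossing_listed[OF ef(1-3)] ef(4,5) by blast
  have "c = (1 - t) *\<^sub>R p a + t *\<^sub>R p b" using X_crossing(2)[OF x] o ef(4,5) by blast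
  moreover have "false_nbrs G \<gamma> c \<subseteq> {a, b, c', d}"
  proof
    fix v assume "v \<in> false_nbrs G \<gamma> c"
    then obtain g where g: "g \<in> edges G" "v \<in> g" "c \<in> edge_interior \<gamma> g" unfolding false_nbrs_def by blast
    show "v \<in> {a, b, c', d}"
    proof (cases "g = e")
      case True then show ?thesis using o g by blast
    next
      case False
      obtain a' b' c2 d' t' s' where x': "(a', b', c2, d', t', s') \<in> set X"
        and o': "({a', b'} = e \<and> {c2, d'} = g) \<or> ({a', b'} = g \<and> {c2, d'} = e)"
        using crossing_listed[OF ef(1) g(1) False[symmetric]] ef(4) g(3) by blast
      have "(a, b, c', d, t, s) = (a', b', c2, d', t', s')"
        by (rule X_entry_unique[OF x x', of e]) (use o o' in blast)+
      then show ?thesis using o o' g by auto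
    qed
  qed
  ultimately show ?thesis using x that by blast
qed

theorem class_C1_drawing:
  "one_planar_drawing G p \<gamma> \<and> (\<forall>c1\<in>false_vertices G \<gamma>. \<forall>c2\<in>false_vertices G \<gamma>.
     c1 \<noteq> c2 \<longrightarrow> card (false_nbrs G \<gamma> c1 \<inter> false_nbrs G \<gamma> c2) \<le> 1)"
proof (intro conjI one_planar ballI impI)
  fix c1 c2 assume c: "c1 \<in> false_vertices G \<gamma>" "c2 \<in> false_vertices G \<gamma>" "c1 \<noteq> c2"
  obtain a b c d t s where x1: "(a, b, c, d, t, s) \<in> set X" "c1 = (1 - t) *\<^sub>R p a + t *\<^sub>R p b"
    "false_nbrs G \<gamma> c1 \<subseteq> {a, b, c, d}" by (rule false_vertex_listed[OF c(1)])
  obtain a' b' c' d' t' s' where x2: "(a', b', c', d', t', s') \<in> set X"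
    "c2 = (1 - t') *\<^sub>R p a' + t' *\<^sub>R p b'" "false_nbrs G \<gamma> c2 \<subseteq> {a', b', c', d'}"
    by (rule false_vertex_listed[OF c(2)])
  have "(a, b, c, d, t, s) \<noteq> (a', b', c', d', t', s')" using x1(2) x2(2) c(3) by auto
  then have "card ({a, b, c, d} \<inter> {a', b', c', d'}) \<le> 1"
    using X_apart[rule_format, OF x1(1), unfolded prod.case, rule_format, OF x2(1)] by auto
  moreover have "card (false_nbrs G \<gamma> c1 \<inter> false_nbrs G \<gamma> c2) \<le> card ({a, b, c, d} \<inter> {a', b', c', d'})"
    by (rule card_mono) (use x1(3) x2(3) in auto)
  ultimately show "card (false_nbrs G \<gamma> c1 \<inter> false_nbrs G \<gamma> c2) \<le> 1" by simp
qed

lemma simple_graph: "finite (verts G) \<Longrightarrow> simple_graph G"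
  unfolding simple_graph_def using edges_L L_verts by auto

end

lemma class_C1_if_K43_and_straight_certificate:
  fixes a b :: "nat \<Rightarrow> 'a"
  assumes cert: "straight_certificate G p L X" and G: "finite (verts G)" "card (verts G) \<le> 7"
    and a: "inj_on a {..<4}" and b: "inj_on b {..<3}" and ab: "a ` {..<4} \<inter> b ` {..<3} = {}"
    and edges: "\<And>i j. i < 4 \<Longrightarrow> j < 3 \<Longrightarrow> {a i, b j} \<in> edges G"
  shows "class_C1 G"
  unfolding class_C1_def
proof
  show "\<not> class_C0 G"
    by (rule not_class_C0_if_K43[OF straight_certificate.simple_graph[OF cert G(1)] G(2) a b ab edges])
  show "\<exists>p \<gamma>. one_planar_drawing G p \<gamma> \<and> (\<forall>c1\<in>false_vertices G \<gamma>. \<forall>c2\<in>false_vertices G \<gamma>.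
      c1 \<noteq> c2 \<longrightarrow> card (false_nbrs G \<gamma> c1 \<inter> false_nbrs G \<gamma> c2) \<le> 1)"
    using straight_certificate.class_C1_drawing[OF cert] by blast
qed

section \<open>The two graphs\<close>

lemma small_nat_ranges:
  "{0..<1::nat} = {0}" "{0..<2::nat} = {0, 1}" "{0..<3::nat} = {0, 1, 2}" "{0..<4::nat} = {0, 1, 2, 3}"
  by auto

lemma Collect_Suc_less: "{f i | i. Suc i < n} = f ` {0..<n - 1}"
  by auto

lemma Collect_pairs_image: "{f u v | u v. u \<in> S \<and> v \<in> T} = (\<lambda>(u, v). f u v) ` (S \<times> T)"
  by auto

lemma Collect_indexed_image: "{f i e | i e. i < (n::nat) \<and> e \<in> S} = (\<lambda>(i, e). f i e) ` ({0..<n} \<times> S)"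
  by (auto simp: image_iff) blast+

lemma path_graph_small_edges:
  "{{i, Suc i} | i::nat. Suc i < 2} = {{0, 1}}"
  "{{i, Suc i} | i::nat. Suc i < 3} = {{0, 1}, {1, 2}}"
  "{{i, Suc i} | i::nat. Suc i < 4} = {{0, 1}, {1, 2}, {2, 3}}"
  unfolding Collect_Suc_less
  by (simp add: small_nat_ranges) (simp add: small_nat_ranges, simp add: numeral_2_eq_2 numeral_3_eq_3)+

abbreviation "G1 \<equiv> graph_join (path_graph 4) (path_graph 3)"

definition L1 :: "((nat + nat) \<times> (nat + nat)) list" where
  "L1 = [(Inl 0, Inr 0), (Inl 0, Inr 1), (Inl 0, Inr 2), (Inl 1, Inr 0), (Inl 1, Inr 1), (Inl 1, Inr 2),
    (Inl 2, Inr 0), (Inl 2, Inr 1), (Inl 2, Inr 2), (Inl 3, Inr 0), (Inl 3, Inr 1), (Inl 3, Inr 2),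
    (Inr 0, Inr 1), (Inr 1, Inr 2), (Inl 0, Inl 1), (Inl 1, Inl 2), (Inl 2, Inl 3)]"

definition p1 :: "nat + nat \<Rightarrow> complex" where
  "p1 v = (case v of Inl i \<Rightarrow> (if i = 0 then Complex 2 (-3) else if i = 1 then Complex (-6) (-1)
      else if i = 2 then Complex 6 5 else Complex 4 2)
    | Inr j \<Rightarrow> (if j = 0 then Complex 2 (-4) else if j = 1 then Complex 3 0 else Complex (-1) 0))"

definition X1 :: "((nat + nat) \<times> (nat + nat) \<times> (nat + nat) \<times> (nat + nat) \<times> real \<times> real) list" where
  "X1 = [(Inl 0, Inr 2, Inl 1, Inr 1, 13/15, 3/5), (Inl 2, Inr 1, Inl 3, Inr 0, 3/4, 1/8)]"

lemma verts_G1: "verts G1 = {Inl 0, Inl 1, Inl 2, Inl 3, Inr 0, Inr 1, Inr 2}"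
  unfolding graph_join_def path_graph_def verts_def small_nat_ranges by auto

lemma edges_G1: "edges G1 = (\<lambda>(u, v). {u, v}) ` set L1"
  unfolding graph_join_def path_graph_def edges_def verts_def L1_def path_graph_small_edges
    small_nat_ranges Collect_pairs_image
  by simp

lemma straight_certificate_G1: "straight_certificate G1 p1 L1 X1"
proof
  show "edges G1 = (\<lambda>(u, v). {u, v}) ` set L1" by (rule edges_G1)
  show "inj_on p1 (verts G1)" unfolding verts_G1 by (simp add: p1_def)
  show "\<forall>(u, v)\<in>set L1. u \<in> verts G1 \<and> v \<in> verts G1 \<and> u \<noteq> v" unfolding verts_G1 L1_def by simp
  show "\<forall>(u, v)\<in>set L1. \<forall>w\<in>verts G1. w = u \<or> w = v \<or> orient (p1 u) (p1 v) (p1 w) \<noteq> 0"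
    unfolding verts_G1 L1_def by (simp add: p1_def orient_def)
  show "\<forall>(u, v)\<in>set L1. \<forall>(u', v')\<in>set L1. {u, v} = {u', v'} \<or> separated (p1 u) (p1 v) (p1 u') (p1 v') \<or>
      (\<exists>(a, b, c, d, t, s)\<in>set X1. ({a, b} = {u, v} \<and> {c, d} = {u', v'}) \<or> ({a, b} = {u', v'} \<and> {c, d} = {u, v}))"
    unfolding L1_def X1_def by (simp add: p1_def separated_def same_side_def orient_def)
  show "\<forall>(a, b, c, d, t, s)\<in>set X1. (a, b) \<in> set L1 \<and> (c, d) \<in> set L1 \<and> distinct [a, b, c, d] \<and>
      0 < t \<and> t < 1 \<and> 0 < s \<and> s < 1 \<and> (1 - t) *\<^sub>R p1 a + t *\<^sub>R p1 b = (1 - s) *\<^sub>R p1 c + s *\<^sub>R p1 d \<and>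
      orient 0 (p1 b - p1 a) (p1 d - p1 c) \<noteq> 0"
    unfolding X1_def L1_def by (simp add: p1_def orient_def complex_eq_iff)
  show "\<forall>(a, b, c, d, t, s)\<in>set X1. \<forall>(a', b', c', d', t', s')\<in>set X1.
      (a, b, c, d, t, s) \<noteq> (a', b', c', d', t', s') \<longrightarrow>
      {a, b} \<noteq> {a', b'} \<and> {a, b} \<noteq> {c', d'} \<and> {c, d} \<noteq> {a', b'} \<and> {c, d} \<noteq> {c', d'} \<and>
      card ({a, b, c, d} \<inter> {a', b', c', d'}) \<le> 1"
    unfolding X1_def by (simp add: doubleton_eq_iff)
qed

lemma class_C1_G1: "class_C1 G1"
proof (rule class_C1_if_K43_and_straight_certificate[OF straight_certificate_G1, where a = Inl and b = Inr])
  show "{Inl i, Inr j} \<in> edges G1" if "i < 4" "j < 3" for i j :: nat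
    using that unfolding graph_join_def path_graph_def edges_def verts_def by auto
qed (auto simp: verts_G1)

abbreviation "G2 \<equiv> graph_join (disj_copies 2 (path_graph 2)) (cycle_graph 3)"

definition L2 :: "((nat \<times> nat + nat) \<times> (nat \<times> nat + nat)) list" where
  "L2 = [(Inl (0,0), Inr 0), (Inl (0,0), Inr 1), (Inl (0,0), Inr 2), (Inl (0,1), Inr 0), (Inl (0,1), Inr 1),
    (Inl (0,1), Inr 2), (Inl (1,0), Inr 0), (Inl (1,0), Inr 1), (Inl (1,0), Inr 2), (Inl (1,1), Inr 0),
    (Inl (1,1), Inr 1), (Inl (1,1), Inr 2), (Inr 2, Inr 0), (Inr 0, Inr 1), (Inr 1, Inr 2),
    (Inl (0,0), Inl (0,1)), (Inl (1,0), Inl (1,1))]"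

definition p2 :: "nat \<times> nat + nat \<Rightarrow> complex" where
  "p2 v = (case v of Inl xy \<Rightarrow> (if xy = (0,0) then Complex 1 3 else if xy = (0,1) then Complex 4 (-1)
      else if xy = (1,0) then Complex (-6) (-6) else Complex 2 6)
    | Inr j \<Rightarrow> (if j = 0 then Complex (-3) (-2) else if j = 1 then Complex 5 (-3) else Complex 2 5))"

definition X2 :: "((nat \<times> nat + nat) \<times> (nat \<times> nat + nat) \<times> (nat \<times> nat + nat) \<times> (nat \<times> nat + nat) \<times> real \<times> real) list" where
  "X2 = [(Inl (0,0), Inr 1, Inl (0,1), Inr 0, 31/46, 1/23), (Inl (1,0), Inr 2, Inl (1,1), Inr 0, 4/9, 8/9)]"

lemma verts_G2: "verts G2 = {Inl (0,0), Inl (0,1), Inl (1,0), Inl (1,1), Inr 0, Inr 1, Inr 2}"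
  unfolding graph_join_def disj_copies_def cycle_graph_def path_graph_def verts_def small_nat_ranges by auto

lemma edges_G2: "edges G2 = (\<lambda>(u, v). {u, v}) ` set L2"
  unfolding graph_join_def disj_copies_def cycle_graph_def path_graph_def edges_def verts_def L2_def
    path_graph_small_edges small_nat_ranges Collect_pairs_image Collect_indexed_image
  by simp

lemma straight_certificate_G2: "straight_certificate G2 p2 L2 X2"
proof
  show "edges G2 = (\<lambda>(u, v). {u, v}) ` set L2" by (rule edges_G2)
  show "inj_on p2 (verts G2)" unfolding verts_G2 by (simp add: p2_def)
  show "\<forall>(u, v)\<in>set L2. u \<in> verts G2 \<and> v \<in> verts G2 \<and> u \<noteq> v" unfolding verts_G2 L2_def by simp
  show "\<forall>(u, v)\<in>set L2. \<forall>w\<in>verts G2. w = u \<or> w = v \<or> orient (p2 u) (p2 v) (p2 w) \<noteq> 0"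
    unfolding verts_G2 L2_def by (simp add: p2_def orient_def)
  show "\<forall>(u, v)\<in>set L2. \<forall>(u', v')\<in>set L2. {u, v} = {u', v'} \<or> separated (p2 u) (p2 v) (p2 u') (p2 v') \<or>
      (\<exists>(a, b, c, d, t, s)\<in>set X2. ({a, b} = {u, v} \<and> {c, d} = {u', v'}) \<or> ({a, b} = {u', v'} \<and> {c, d} = {u, v}))"
    unfolding L2_def X2_def by (simp add: p2_def separated_def same_side_def orient_def)
  show "\<forall>(a, b, c, d, t, s)\<in>set X2. (a, b) \<in> set L2 \<and> (c, d) \<in> set L2 \<and> distinct [a, b, c, d] \<and>
      0 < t \<and> t < 1 \<and> 0 < s \<and> s < 1 \<and> (1 - t) *\<^sub>R p2 a + t *\<^sub>R p2 b = (1 - s) *\<^sub>R p2 c + s *\<^sub>R p2 d \<and>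
      orient 0 (p2 b - p2 a) (p2 d - p2 c) \<noteq> 0"
    unfolding X2_def L2_def by (simp add: p2_def orient_def complex_eq_iff)
  show "\<forall>(a, b, c, d, t, s)\<in>set X2. \<forall>(a', b', c', d', t', s')\<in>set X2.
      (a, b, c, d, t, s) \<noteq> (a', b', c', d', t', s') \<longrightarrow>
      {a, b} \<noteq> {a', b'} \<and> {a, b} \<noteq> {c', d'} \<and> {c, d} \<noteq> {a', b'} \<and> {c, d} \<noteq> {c', d'} \<and>
      card ({a, b, c, d} \<inter> {a', b', c', d'}) \<le> 1"
    unfolding X2_def by (simp add: doubleton_eq_iff)
qed

lemma class_C1_G2: "class_C1 G2"
proof (rule class_C1_if_K43_and_straight_certificate[OF straight_certificate_G2,
      where a = "\<lambda>i. Inl (i div 2, i mod 2)" and b = Inr])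
  show "{Inl (i div 2, i mod 2), Inr j} \<in> edges G2" if "i < 4" "j < 3" for i j :: nat
  proof -
    have "(i div 2, i mod 2) \<in> {0..<2} \<times> {0..<2}" "j \<in> {0..<3}" using that by auto
    then show ?thesis
      unfolding graph_join_def disj_copies_def cycle_graph_def path_graph_def edges_def verts_def snd_conv fst_conv
      by (intro UnI2 CollectI exI[of _ "(i div 2, i mod 2)"] exI[of _ j] conjI refl)
  qed
  show "inj_on (\<lambda>i. Inl (i div 2, i mod 2) :: nat \<times> nat + nat) {..<4}"
  proof (rule inj_onI)
    fix i k :: nat assume "(Inl (i div 2, i mod 2) :: nat \<times> nat + nat) = Inl (k div 2, k mod 2)"
    then have "i div 2 = k div 2" "i mod 2 = k mod 2" by simp_all
    then show "i = k" by (metis div_mult_mod_eq)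
  qed
qed (auto simp: verts_G2)

theorem lemma11:
  shows "class_C1 (graph_join (path_graph 4) (path_graph 3)) \<and>
         class_C1 (graph_join (disj_copies 2 (path_graph 2)) (cycle_graph 3))"
  using class_C1_G1 class_C1_G2 by (rule conjI)

end
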